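(* Let $d \ge 1$, $\rho \ge 0$, and let $r^{(1)}, \dots, r^{(\rho)} \in (0,1)^d$ be pairwise incomparable points such that for each $j \in [d]$ the values $r^{(i)}_j$, $i \in [\rho]$, are distinct. Then the number $\gamma$ of generators of their record-setting region satisfies $$\gamma \le \binom{\rho + d - 1}{d-1}.$$
   Context: For $x,y \in \mathbb{R}^d$, $x \prec y$ means $x_j < y_j$ for all $j \in [d]$, and $x \le y$ means $x_j \le y_j$ for all $j$. The record-setting region of points $r^{(1)},\dots,r^{(\rho)}$ is $S := \{x \in [0,1)^d : x \not\prec r^{(i)} \text{ for all } i \in [\rho]\}$, and its generators are the minimal elements of $S$ with respect to $\le$. *)

theory Defs
  imports "HOL-Analysis.Analysis"
begin

text \<open>Points of R^d are vectors real^'n with d = CARD('n).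
  The record points are r 0, ..., r (rho - 1).\<close>

definition strict_dom :: "real^'n \<Rightarrow> real^'n \<Rightarrow> bool" where
  "strict_dom x y \<longleftrightarrow> (\<forall>j. x $ j < y $ j)"

definition weak_dom :: "real^'n \<Rightarrow> real^'n \<Rightarrow> bool" where
  "weak_dom x y \<longleftrightarrow> (\<forall>j. x $ j \<le> y $ j)"

definition record_region :: "(nat \<Rightarrow> real^'n) \<Rightarrow> nat \<Rightarrow> (real^'n) set" where
  "record_region r rho =
     {x. (\<forall>j. 0 \<le> x $ j \<and> x $ j < 1) \<and> (\<forall>i<rho. \<not> strict_dom x (r i))}"

definition generators :: "(nat \<Rightarrow> real^'n) \<Rightarrow> nat \<Rightarrow> (real^'n) set" where
  "generators r rho =
     {x \<in> record_region r rho.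
        \<forall>y \<in> record_region r rho. weak_dom y x \<longrightarrow> y = x}"

end

theory Submission
  imports Defs
begin

text \<open>Induction on the set of coordinates. Fix a coordinate a and let x be a generator.
  Minimality forces x a to be 0 or one of the values p a; and once x a = v is fixed, the
  remaining coordinates of x form a generator of the record-setting region, in one dimension
  less, of the points p with p a > v. Since v ranges over at most \<rho> + 1 values, and distinct
  values leave distinct numbers s of surviving points, the bound satisfies
  \<gamma>(\<rho>, d) \<le> \<Sum>s\<le>\<rho>. \<gamma>(s, d - 1), which the hockey-stick identity turns into the binomial
  coefficient.\<close>

text \<open>Points are functions; only the coordinates in J are free, the others are pinned to 0, so
  that dropping a coordinate stays within the same type.\<close>

definition region_on :: "'a set \<Rightarrow> ('a \<Rightarrow> real) set \<Rightarrow> ('a \<Rightarrow> real) set" where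
  "region_on J P = {x. (\<forall>j\<in>J. 0 \<le> x j \<and> x j < 1) \<and> (\<forall>j. j \<notin> J \<longrightarrow> x j = 0)
                      \<and> (\<forall>p\<in>P. \<exists>j\<in>J. p j \<le> x j)}"

definition generators_on :: "'a set \<Rightarrow> ('a \<Rightarrow> real) set \<Rightarrow> ('a \<Rightarrow> real) set" where
  "generators_on J P = {x \<in> region_on J P. \<forall>y\<in>region_on J P. y \<le> x \<longrightarrow> y = x}"

lemma sum_shifted_choose: "(\<Sum>s\<le>n. (s + k) choose k) = (n + k + 1) choose (k + 1)"
  by (induction n) auto

lemma card_greater_less:
  fixes f :: "'b \<Rightarrow> 'c::linorder"
  assumes "finite P" "q \<in> P" "v < f q"
  shows "card {p \<in> P. f q < f p} < card {p \<in> P. v < f p}"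
  using assms by (intro psubset_card_mono) auto

lemma generators_on_singleton:
  "finite (generators_on {a} P) \<and> card (generators_on {a} P) \<le> 1"
proof -
  have unique: "x = y" if x: "x \<in> generators_on {a} P" and y: "y \<in> generators_on {a} P" for x y
  proof -
    have "x j = y j" if "j \<noteq> a" for j
      using x y that by (auto simp: generators_on_def region_on_def)
    then have "x \<le> y \<or> y \<le> x"
      using linorder_le_cases[of "x a" "y a"] by (metis le_fun_def order_refl)
    then show ?thesis
      using x y by (auto simp: generators_on_def)
  qed
  show ?thesis
  proof (cases "generators_on {a} P = {}")
    case False
    then obtain x where "generators_on {a} P \<subseteq> {x}"
      using unique by blast
    then show ?thesis
      using card_mono[of "{x}"] finite_subset by fastforce
  qed simp
qed

text \<open>Otherwise x a could be lowered to the largest value p a below it (or to 0) without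
  re-entering any of the boxes [0, p).\<close>

lemma generator_coord_cases:
  assumes x: "x \<in> generators_on J P" and a: "a \<in> J" and "finite P"
  shows "x a = 0 \<or> (\<exists>p\<in>P. x a = p a)"
proof (rule ccontr)
  assume not_attained: "\<not> (x a = 0 \<or> (\<exists>p\<in>P. x a = p a))"
  have xr: "x \<in> region_on J P"
    using x by (simp add: generators_on_def)
  then have xa: "0 < x a"
    using not_attained a by (auto simp: region_on_def)
  define U where "U = insert 0 {p a | p. p \<in> P \<and> p a < x a}"
  have "finite U"
    unfolding U_def using \<open>finite P\<close> by auto
  define u where "u = Max U"
  have u_ge: "p a \<le> u" if "p \<in> P" "p a < x a" for p
    unfolding u_def using \<open>finite U\<close> U_def that by (intro Max_ge) auto
  have "0 \<le> u"
    unfolding u_def using \<open>finite U\<close> U_def by (intro Max_ge) auto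
  have "u < x a"
    using Max_in[of U] \<open>finite U\<close> xa unfolding u_def U_def by auto
  define w where "w = x(a := u)"
  have "w \<in> region_on J P"
    unfolding region_on_def
  proof (intro CollectI conjI ballI allI impI)
    fix p assume p: "p \<in> P"
    show "\<exists>j\<in>J. p j \<le> w j"
    proof (cases "p a < x a")
      case True
      then show ?thesis
        using u_ge p a unfolding w_def by force
    next
      case False
      then have "x a < p a"
        using not_attained p by force
      with xr p obtain j where "j \<in> J" "p j \<le> x j" "j \<noteq> a"
        unfolding region_on_def by force
      then show ?thesis
        unfolding w_def by force
    qed
  qed (use xr \<open>0 \<le> u\<close> \<open>u < x a\<close> in \<open>auto simp: w_def region_on_def\<close>)
  moreover have "w \<le> x"
    unfolding w_def le_fun_def using \<open>u < x a\<close> by auto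
  ultimately have "w = x"
    using x by (auto simp: generators_on_def)
  then show False
    using \<open>u < x a\<close> unfolding w_def by (metis fun_upd_same less_irrefl)
qed

lemma generator_restrict:
  assumes x: "x \<in> generators_on (insert a J) P" and "a \<notin> J"
  shows "x(a := 0) \<in> generators_on J {p \<in> P. x a < p a}"
proof -
  have xr: "x \<in> region_on (insert a J) P"
    using x by (simp add: generators_on_def)
  have "x(a := 0) \<in> region_on J {p \<in> P. x a < p a}"
    unfolding region_on_def
  proof (intro CollectI conjI ballI allI impI)
    fix p assume "p \<in> {p \<in> P. x a < p a}"
    with xr obtain j where "j \<in> insert a J" "p j \<le> x j" "j \<noteq> a"
      unfolding region_on_def by force
    then show "\<exists>j\<in>J. p j \<le> (x(a := 0)) j"
      by auto
  qed (use xr in \<open>auto simp: region_on_def\<close>)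
  moreover have "y = x(a := 0)"
    if y: "y \<in> region_on J {p \<in> P. x a < p a}" and "y \<le> x(a := 0)" for y
  proof -
    have "y(a := x a) \<in> region_on (insert a J) P"
      unfolding region_on_def
    proof (intro CollectI conjI ballI allI impI)
      fix p assume p: "p \<in> P"
      show "\<exists>j\<in>insert a J. p j \<le> (y(a := x a)) j"
      proof (cases "x a < p a")
        case True
        with y p obtain j where "j \<in> J" "p j \<le> y j"
          unfolding region_on_def by force
        then show ?thesis
          using \<open>a \<notin> J\<close> by (intro bexI[of _ j]) auto
      qed auto
    qed (use xr y in \<open>auto simp: region_on_def\<close>)
    moreover have "y(a := x a) \<le> x"
      using \<open>y \<le> x(a := 0)\<close> by (auto simp: le_fun_def split: if_splits)
    ultimately have "y(a := x a) = x"
      using x by (auto simp: generators_on_def)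
    moreover have "y a = 0"
      using y \<open>a \<notin> J\<close> by (auto simp: region_on_def)
    ultimately show ?thesis
      by (metis fun_upd_triv fun_upd_upd)
  qed
  ultimately show ?thesis
    by (auto simp: generators_on_def)
qed

lemma sum_over_thresholds_le:
  fixes f :: "'b \<Rightarrow> real" and g :: "nat \<Rightarrow> nat"
  assumes "finite P"
  shows "(\<Sum>v\<in>insert 0 (f ` P) \<inter> {0..}. g (card {p \<in> P. v < f p})) \<le> (\<Sum>s\<le>card P. g s)"
proof -
  define V where "V = insert 0 (f ` P) \<inter> {0..}"
  define c where "c v = card {p \<in> P. v < f p}" for v
  have c_less: "c w < c v" if "v \<in> V" "w \<in> V" "v < w" for v w
  proof -
    from that obtain q where "q \<in> P" "w = f q"
      unfolding V_def by auto
    then show ?thesis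
      unfolding c_def using card_greater_less[OF \<open>finite P\<close>] \<open>v < w\<close> by blast
  qed
  have "inj_on c V"
  proof (rule inj_onI)
    fix v w assume "v \<in> V" "w \<in> V" "c v = c w"
    then show "v = w"
      using c_less[of v w] c_less[of w v] by (cases v w rule: linorder_cases) auto
  qed
  moreover have "c ` V \<subseteq> {..card P}"
    unfolding c_def using \<open>finite P\<close> by (auto intro: card_mono)
  ultimately have "(\<Sum>v\<in>V. g (c v)) \<le> (\<Sum>s\<le>card P. g s)"
    using sum.reindex[of c V g] sum_mono2[of "{..card P}" "c ` V" g] by simp
  then show ?thesis
    unfolding V_def c_def .
qed

lemma card_generators_on_le:
  assumes "finite J" "J \<noteq> {}" "finite P"
  shows "finite (generators_on J P) \<and>
         card (generators_on J P) \<le> (card P + card J - 1) choose (card J - 1)"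
  using assms
proof (induction J arbitrary: P rule: finite_ne_induct)
  case (singleton a)
  then show ?case
    using generators_on_singleton[of a P] by simp
next
  case (insert a J)
  obtain m where m: "card J = Suc m"
    using insert.hyps by (metis card_gt_0_iff gr0_implies_Suc)
  define G where "G = generators_on (insert a J) P"
  define Pv where "Pv v = {p \<in> P. v < p a}" for v
  define V where "V = insert 0 ((\<lambda>p. p a) ` P) \<inter> {0..}"
  have IH: "finite (generators_on J (Pv v)) \<and>
            card (generators_on J (Pv v)) \<le> (card (Pv v) + m) choose m" for v
    using insert.IH[of "Pv v"] insert.prems m by (simp add: Pv_def)
  define F where "F x = (x a, x(a := 0))" for x :: "'a \<Rightarrow> real"
  have "inj_on F G"
    unfolding F_def by (rule inj_onI) (metis fun_upd_triv fun_upd_upd prod.inject)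
  moreover have F_into: "F ` G \<subseteq> Sigma V (\<lambda>v. generators_on J (Pv v))"
  proof
    fix y assume "y \<in> F ` G"
    then obtain x where x: "x \<in> G" "y = F x"
      by auto
    have "x a \<in> V"
      using generator_coord_cases[of x "insert a J" P a] x insert.prems
      by (auto simp: V_def G_def generators_on_def region_on_def)
    then show "y \<in> Sigma V (\<lambda>v. generators_on J (Pv v))"
      using generator_restrict[of x a J P] x insert.hyps
      by (auto simp: F_def G_def Pv_def)
  qed
  moreover have "finite (Sigma V (\<lambda>v. generators_on J (Pv v)))"
    using insert.prems IH by (auto simp: V_def)
  ultimately have "finite G"
    by (metis finite_imageD finite_subset)
  have "card G \<le> card (Sigma V (\<lambda>v. generators_on J (Pv v)))"
    using card_image[OF \<open>inj_on F G\<close>] card_mono[OF _ F_into]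
      \<open>finite (Sigma V _)\<close> by simp
  also have "\<dots> = (\<Sum>v\<in>V. card (generators_on J (Pv v)))"
    using insert.prems IH by (simp add: V_def)
  also have "\<dots> \<le> (\<Sum>v\<in>V. (card (Pv v) + m) choose m)"
    using IH by (intro sum_mono) simp
  also have "\<dots> \<le> (\<Sum>s\<le>card P. (s + m) choose m)"
    using sum_over_thresholds_le[OF insert.prems,
        where f = "\<lambda>p. p a" and g = "\<lambda>s. (s + m) choose m"]
    unfolding V_def Pv_def .
  also have "\<dots> = (card P + card (insert a J) - 1) choose (card (insert a J) - 1)"
    using sum_shifted_choose[where n = "card P" and k = m] insert.hyps m by simp
  finally show ?case
    using \<open>finite G\<close> by (simp add: G_def)
qed

lemma image_minimal_elements:
  fixes h :: "'a \<Rightarrow> 'b::order"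
  assumes "inj h" and "\<And>x y. le x y \<longleftrightarrow> h x \<le> h y"
  shows "h ` {x \<in> R. \<forall>y\<in>R. le y x \<longrightarrow> y = x} = {f \<in> h ` R. \<forall>g\<in>h ` R. g \<le> f \<longrightarrow> g = f}"
  using assms by (auto simp: inj_eq)

lemma vec_nth_generators:
  "vec_nth ` generators r rho = generators_on UNIV ((\<lambda>i. vec_nth (r i)) ` {..<rho})"
proof -
  have region: "vec_nth ` record_region r rho = region_on UNIV ((\<lambda>i. vec_nth (r i)) ` {..<rho})"
  proof (intro equalityI subsetI)
    fix f assume "f \<in> region_on UNIV ((\<lambda>i. vec_nth (r i)) ` {..<rho})"
    then have "vec_lambda f \<in> record_region r rho"
      by (auto simp: region_on_def record_region_def strict_dom_def not_less)
    then show "f \<in> vec_nth ` record_region r rho"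
      by (metis image_eqI vec_lambda_inverse UNIV_I)
  qed (auto simp: region_on_def record_region_def strict_dom_def not_less)
  have "vec_nth ` generators r rho =
        {f \<in> vec_nth ` record_region r rho. \<forall>g\<in>vec_nth ` record_region r rho. g \<le> f \<longrightarrow> g = f}"
    unfolding generators_def
    by (rule image_minimal_elements) (auto simp: inj_def vec_eq_iff weak_dom_def le_fun_def)
  then show ?thesis
    unfolding region generators_on_def .
qed

theorem theoremT:
  fixes r :: "nat \<Rightarrow> real^'n" and rho :: nat
  assumes "\<forall>i<rho. \<forall>j. 0 < r i $ j \<and> r i $ j < 1"
    and "\<forall>i<rho. \<forall>k<rho. i \<noteq> k \<longrightarrow> \<not> weak_dom (r i) (r k)"
    and "\<forall>j. inj_on (\<lambda>i. r i $ j) {..<rho}"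
  shows "finite (generators r rho) \<and>
         card (generators r rho) \<le> (rho + CARD('n) - 1) choose (CARD('n) - 1)"
proof -
  define P where "P = (\<lambda>i. vec_nth (r i)) ` {..<rho}"
  have "inj_on vec_nth (generators r rho)"
    by (rule inj_onI) (simp add: vec_eq_iff)
  moreover have "finite (generators_on UNIV P) \<and>
      card (generators_on (UNIV :: 'n set) P) \<le> (card P + CARD('n) - 1) choose (CARD('n) - 1)"
    using card_generators_on_le[of "UNIV :: 'n set" P] by (simp add: P_def)
  ultimately have "finite (generators r rho)"
    and "card (generators r rho) \<le> (card P + CARD('n) - 1) choose (CARD('n) - 1)"
    using vec_nth_generators[of r rho] card_image finite_imageD
    by (metis P_def)+
  moreover have "card P \<le> rho"
    unfolding P_def using card_image_le[of "{..<rho}"] by simp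
  ultimately show ?thesis
    using binomial_right_mono[of "card P + CARD('n) - 1"] by (meson add_le_mono1 diff_le_mono le_trans)
qed

end
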